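(* Let $N\ge 3$, $K\ge 2$ and $L$ be integers with $1\le L<N-1$, let $M=N(L+1)^{K-1}$, and define costs $d_m=L$ for $m\in[1:N]$ and $d_m=L+1$ for $m\in[N+1:M]$. Let $C=\left(\sum_{k=0}^{K-1}N^{-k}\right)^{-1}$ and $1\le D\le 1/C$. Let $\mathcal{F}_D$ be the set of probability vectors $P=(p_1,\dots,p_M)$ with $\frac1L\sum_{m=1}^M p_md_m=D$, and $U$ the uniform distribution on $[1:M]$. (i) For every $0<\alpha<\infty$ (including $\alpha=1$), the unique minimizer of $D_\alpha(P\|U)$ over $\mathcal{F}_D$ is $$p_m=\begin{cases}\dfrac{1-L(D-1)}{N}, & m\in[1:N],\\[2mm]\dfrac{L(D-1)}{N(L+1)^{K-1}-N}, & m\in[N+1:M].\end{cases}$$ (ii) For $\alpha=\infty$, $P\in\mathcal{F}_D$ minimizes $D_\infty(P\|U)$ over $\mathcal{F}_D$ if and only if $p_m=\frac{1-L(D-1)}{N}$ for all $m\in[1:N]$ and $(p_m)_{m\in[N+1:M]}$ is any nonnegative vector with $\sum_{m=N+1}^{M}p_m=L(D-1)$ and $p_m\le\frac{1-L(D-1)}{N}$ for each $m\in[N+1:M]$.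
   Context: Notation: $[i:j]=\{i,\dots,j\}$; natural logarithms. Rényi divergence for probability vectors $P,U$ on $[1:M]$ with $u_m>0$: $D_\alpha(P\|U)=\frac{1}{\alpha-1}\log\sum_m p_m^\alpha u_m^{1-\alpha}$ for $0<\alpha<\infty,\alpha\ne1$; $D_1(P\|U)=\sum_m p_m\log\frac{p_m}{u_m}$ (with $0\log0=0$); $D_\infty(P\|U)=\log\max_m\frac{p_m}{u_m}$. (Interpretation: the $N(L+1)^{K-1}$ query options of the paper's alternative probabilistic PIR scheme with $N$ databases, $K$ messages and message length $L$; the first $N$ options have download cost $L$, the rest $L+1$; $D$ is the expected download cost normalized by $L$.) *)

theory Defs
  imports Complex_Main
begin

text \<open>Probability vectors on [1:M] are modelled as functions nat => real;
  only the values on {1..M} matter.\<close>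

definition renyi_div :: "real \<Rightarrow> nat \<Rightarrow> (nat \<Rightarrow> real) \<Rightarrow> (nat \<Rightarrow> real) \<Rightarrow> real" where
  "renyi_div \<alpha> M p u =
     (if \<alpha> = 1 then (\<Sum>m\<in>{1..M}. (if p m = 0 then 0 else p m * ln (p m / u m)))
      else 1 / (\<alpha> - 1) * ln (\<Sum>m\<in>{1..M}. p m powr \<alpha> * u m powr (1 - \<alpha>)))"

definition renyi_div_inf :: "nat \<Rightarrow> (nat \<Rightarrow> real) \<Rightarrow> (nat \<Rightarrow> real) \<Rightarrow> real" where
  "renyi_div_inf M p u = ln (Max ((\<lambda>m. p m / u m) ` {1..M}))"

definition num_opts :: "nat \<Rightarrow> nat \<Rightarrow> nat \<Rightarrow> nat" where
  "num_opts N K L = N * (L + 1) ^ (K - 1)"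

definition cost :: "nat \<Rightarrow> nat \<Rightarrow> nat \<Rightarrow> real" where
  "cost N L m = (if m \<le> N then real L else real L + 1)"

definition uniform_dist :: "nat \<Rightarrow> nat \<Rightarrow> real" where
  "uniform_dist M m = 1 / real M"

definition const_C :: "nat \<Rightarrow> nat \<Rightarrow> real" where
  "const_C N K = 1 / (\<Sum>k<K. 1 / real N ^ k)"

definition feasible :: "nat \<Rightarrow> nat \<Rightarrow> nat \<Rightarrow> real \<Rightarrow> (nat \<Rightarrow> real) set" where
  "feasible N K L D = {p. (\<forall>m\<in>{1..num_opts N K L}. 0 \<le> p m)
      \<and> (\<Sum>m\<in>{1..num_opts N K L}. p m) = 1
      \<and> (1 / real L) * (\<Sum>m\<in>{1..num_opts N K L}. p m * cost N L m) = D}"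

end

theory Submission
  imports Defs
begin

text \<open>With \<open>s = L (D - 1)\<close>, the cost constraint says exactly that the \<open>N\<close> cheap options
  carry mass \<open>1 - s\<close> and the \<open>M - N\<close> expensive ones mass \<open>s\<close>. For finite \<open>\<alpha>\<close>,
  \<open>D\<^sub>\<alpha>(P\<parallel>U)\<close> is an increasing function of \<open>\<Sum> \<phi>(p\<^sub>m)\<close> for a strictly convex \<open>\<phi>\<close>
  (\<open>t ln t\<close>, \<open>t\<^sup>\<alpha>\<close> or \<open>-t\<^sup>\<alpha>\<close>), and on each block of fixed mass this sum is uniquely
  minimised by the constant vector. For \<open>\<alpha> = \<infinity>\<close>, \<open>D\<^sub>\<infinity>(P\<parallel>U) = ln (M max p\<^sub>m)\<close>; the
  cheap block forces \<open>max p\<^sub>m \<ge> (1 - s)/N\<close>, with equality exactly when no entry exceeds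
  \<open>(1 - s)/N\<close>. The hypothesis \<open>D \<le> 1/C\<close> is what makes \<open>s/(M - N) \<le> (1 - s)/N\<close>, so that
  the blockwise constant vector attains this bound.\<close>

definition prob_vec :: "nat \<Rightarrow> (nat \<Rightarrow> real) \<Rightarrow> bool" where
  "prob_vec M P \<longleftrightarrow> (\<forall>m\<in>{1..M}. 0 \<le> P m) \<and> sum P {1..M} = 1"

definition block_feasible :: "nat \<Rightarrow> nat \<Rightarrow> real \<Rightarrow> (nat \<Rightarrow> real) \<Rightarrow> bool" where
  "block_feasible N M s P \<longleftrightarrow> prob_vec M P \<and> sum P {N+1..M} = s"

definition block_vec :: "nat \<Rightarrow> nat \<Rightarrow> real \<Rightarrow> nat \<Rightarrow> real" where
  "block_vec N M s m = (if m \<le> N then (1 - s) / real N else s / (real M - real N))"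

lemma sum_split_at:
  fixes f :: "nat \<Rightarrow> 'a::comm_monoid_add"
  assumes "N \<le> M"
  shows "sum f {1..M} = sum f {1..N} + sum f {N+1..M}"
  using sum.ub_add_nat[of 1 N f "M - N"] assms by simp

lemma block_feasible_head_sum:
  assumes "N \<le> M" "block_feasible N M s P"
  shows "sum P {1..N} = 1 - s"
  using assms sum_split_at[of N M P] unfolding block_feasible_def prob_vec_def by simp

lemma block_vec_feasible:
  assumes "1 \<le> N" "N < M" "0 \<le> s" "s \<le> 1"
  shows "block_feasible N M s (block_vec N M s)"
proof -
  have head: "sum (block_vec N M s) {1..N} = 1 - s"
    using assms(1) by (simp add: block_vec_def)
  have tail: "sum (block_vec N M s) {N+1..M} = s"
    using assms(2) by (simp add: block_vec_def)
  show ?thesis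
    using assms head tail sum_split_at[of N M "block_vec N M s"]
    unfolding block_feasible_def prob_vec_def block_vec_def by auto
qed

text \<open>Strict convexity on \<open>[0, \<infinity>)\<close> in supporting-line form, which needs no derivative
  at \<open>0\<close> (where \<open>t ln t\<close> has none).\<close>

definition strictly_supported :: "(real \<Rightarrow> real) \<Rightarrow> bool" where
  "strictly_supported g \<longleftrightarrow> (\<forall>c>0. \<exists>d. \<forall>t\<ge>0. t \<noteq> c \<longrightarrow> g c + d * (t - c) < g t)"

lemma tangent_below_of_deriv_strict_mono:
  fixes g g' :: "real \<Rightarrow> real"
  assumes deriv: "\<And>x. 0 < x \<Longrightarrow> (g has_real_derivative g' x) (at x)"
    and mono: "\<And>x y. 0 < x \<Longrightarrow> x < y \<Longrightarrow> g' x < g' y"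
    and "0 < c" "0 < t" "t \<noteq> c"
  shows "g c + g' c * (t - c) < g t"
proof (cases "t < c")
  case True
  obtain z where z: "t < z" "z < c" "g c - g t = (c - t) * g' z"
    using MVT2[OF True, of g g'] deriv \<open>0 < t\<close> by force
  have "(c - t) * g' z < (c - t) * g' c"
    using mono[of z c] z \<open>0 < t\<close> True by simp
  then show ?thesis using z by (simp add: algebra_simps)
next
  case False
  then have "c < t" using \<open>t \<noteq> c\<close> by simp
  obtain z where z: "c < z" "z < t" "g t - g c = (t - c) * g' z"
    using MVT2[OF \<open>c < t\<close>, of g g'] deriv \<open>0 < c\<close> by force
  have "(t - c) * g' c < (t - c) * g' z"
    using mono[of c z] z \<open>0 < c\<close> \<open>c < t\<close> by simp
  then show ?thesis using z by (simp add: algebra_simps)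
qed

lemma strictly_supportedI:
  fixes g g' :: "real \<Rightarrow> real"
  assumes deriv: "\<And>x. 0 < x \<Longrightarrow> (g has_real_derivative g' x) (at x)"
    and mono: "\<And>x y. 0 < x \<Longrightarrow> x < y \<Longrightarrow> g' x < g' y"
    and at_zero: "\<And>c. 0 < c \<Longrightarrow> g c - g' c * c < g 0"
  shows "strictly_supported g"
  unfolding strictly_supported_def
proof (intro allI impI)
  fix c :: real
  assume "0 < c"
  show "\<exists>d. \<forall>t\<ge>0. t \<noteq> c \<longrightarrow> g c + d * (t - c) < g t"
  proof (intro exI allI impI)
    fix t :: real
    assume "0 \<le> t" "t \<noteq> c"
    then show "g c + g' c * (t - c) < g t"
      using tangent_below_of_deriv_strict_mono[OF deriv mono \<open>0 < c\<close>, of t] at_zero[OF \<open>0 < c\<close>]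
      by (cases "t = 0") auto
  qed
qed

lemma strictly_supported_xlnx: "strictly_supported (\<lambda>t. t * ln t)"
proof (rule strictly_supportedI[where g' = "\<lambda>x. ln x + 1"])
  show "((\<lambda>t. t * ln t) has_real_derivative ln x + 1) (at x)" if "0 < x" for x :: real
    using that by (auto intro!: derivative_eq_intros)
  show "ln x + 1 < ln y + 1" if "0 < x" "x < y" for x y :: real
    using that by simp
  show "c * ln c - (ln c + 1) * c < 0 * ln 0" if "0 < c" for c :: real
    using that by (simp add: algebra_simps)
qed

lemma strictly_supported_powr:
  assumes "1 < \<alpha>"
  shows "strictly_supported (\<lambda>t. t powr \<alpha>)"
proof (rule strictly_supportedI[where g' = "\<lambda>x. \<alpha> * x powr (\<alpha> - 1)"])
  show "((\<lambda>t. t powr \<alpha>) has_real_derivative \<alpha> * x powr (\<alpha> - 1)) (at x)" if "0 < x" for x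
    using has_real_derivative_powr[OF that] by simp
  show "\<alpha> * x powr (\<alpha> - 1) < \<alpha> * y powr (\<alpha> - 1)" if "0 < x" "x < y" for x y
    using powr_less_mono2[of "\<alpha> - 1" x y] that assms by simp
  show "c powr \<alpha> - \<alpha> * c powr (\<alpha> - 1) * c < 0 powr \<alpha>" if "0 < c" for c
    using that assms by (simp add: powr_diff)
qed

lemma strictly_supported_neg_powr:
  assumes "0 < \<alpha>" "\<alpha> < 1"
  shows "strictly_supported (\<lambda>t. - (t powr \<alpha>))"
proof (rule strictly_supportedI[where g' = "\<lambda>x. - (\<alpha> * x powr (\<alpha> - 1))"])
  show "((\<lambda>t. - (t powr \<alpha>)) has_real_derivative - (\<alpha> * x powr (\<alpha> - 1))) (at x)" if "0 < x" for x
    using has_real_derivative_powr[OF that] by (intro DERIV_minus) simp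
  show "- (\<alpha> * x powr (\<alpha> - 1)) < - (\<alpha> * y powr (\<alpha> - 1))" if "0 < x" "x < y" for x y
    using powr_less_mono2_neg[of "\<alpha> - 1" x y] that assms by simp
  show "- (c powr \<alpha>) - - (\<alpha> * c powr (\<alpha> - 1)) * c < - (0 powr \<alpha>)" if "0 < c" for c
    using that assms by (simp add: powr_diff)
qed

lemma sum_strictly_supported_gt:
  assumes "finite I" "\<forall>i\<in>I. 0 \<le> p i" "sum p I = real (card I) * c" "0 \<le> c"
    and "strictly_supported g" "j \<in> I" "p j \<noteq> c"
  shows "real (card I) * g c < (\<Sum>i\<in>I. g (p i))"
proof (cases "c = 0")
  case True
  then have "\<forall>i\<in>I. p i = 0"
    using assms(1-3) sum_nonneg_eq_0_iff by auto
  then show ?thesis using assms(6,7) True by blast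
next
  case False
  then have "0 < c" using assms(4) by simp
  then obtain d where d: "\<And>t. 0 \<le> t \<Longrightarrow> t \<noteq> c \<Longrightarrow> g c + d * (t - c) < g t"
    using assms(5) unfolding strictly_supported_def by blast
  have le: "\<forall>i\<in>I. g c + d * (p i - c) \<le> g (p i)"
    using d assms(2) by (metis order.order_iff_strict add_0_right diff_self mult_zero_right)
  have "real (card I) * g c = (\<Sum>i\<in>I. g c + d * (p i - c))"
    using assms(3) by (simp add: sum.distrib sum_subtractf sum_distrib_left[symmetric])
  also have "\<dots> < (\<Sum>i\<in>I. g (p i))"
    using sum_strict_mono_ex1[OF assms(1) le] d assms(2,6,7) by blast
  finally show ?thesis .
qed

lemma sum_strictly_supported_ge:
  assumes "finite I" "\<forall>i\<in>I. 0 \<le> p i" "sum p I = real (card I) * c" "0 \<le> c"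
    and "strictly_supported g"
  shows "real (card I) * g c \<le> (\<Sum>i\<in>I. g (p i))"
proof (cases "\<forall>i\<in>I. p i = c")
  case True
  then show ?thesis by simp
next
  case False
  then show ?thesis
    using sum_strictly_supported_gt[OF assms] by (meson less_imp_le)
qed

lemma block_vec_minimizes:
  assumes g: "strictly_supported g" and "1 \<le> N" "N < M" "0 \<le> s" "s \<le> 1"
    and P: "block_feasible N M s P"
  shows "(\<Sum>m\<in>{1..M}. g (block_vec N M s m)) \<le> (\<Sum>m\<in>{1..M}. g (P m))"
    and "(\<Sum>m\<in>{1..M}. g (P m)) \<le> (\<Sum>m\<in>{1..M}. g (block_vec N M s m))
           \<Longrightarrow> \<forall>m\<in>{1..M}. P m = block_vec N M s m"
proof -
  define a where "a = (1 - s) / real N"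
  define b where "b = s / (real M - real N)"
  have a: "0 \<le> a" and b: "0 \<le> b"
    using assms(2-5) by (auto simp: a_def b_def)
  have nonneg: "\<forall>m\<in>{1..M}. 0 \<le> P m"
    using P unfolding block_feasible_def prob_vec_def by blast
  have head: "sum P {1..N} = real (card {1..N}) * a"
    using block_feasible_head_sum[OF _ P] assms(2,3) by (simp add: a_def)
  have tail: "sum P {N+1..M} = real (card {N+1..M}) * b"
    using P assms(3) by (simp add: block_feasible_def b_def)
  have vec: "(\<Sum>m\<in>{1..M}. g (block_vec N M s m))
      = real (card {1..N}) * g a + real (card {N+1..M}) * g b"
    using sum_split_at[of N M "\<lambda>m. g (block_vec N M s m)"] assms(3)
    by (simp add: block_vec_def a_def b_def)
  have split_P: "(\<Sum>m\<in>{1..M}. g (P m)) = (\<Sum>m\<in>{1..N}. g (P m)) + (\<Sum>m\<in>{N+1..M}. g (P m))"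
    using sum_split_at[of N M "\<lambda>m. g (P m)"] assms(3) by simp
  have nonneg_head: "\<forall>m\<in>{1..N}. 0 \<le> P m" and nonneg_tail: "\<forall>m\<in>{N+1..M}. 0 \<le> P m"
    using nonneg assms(3) by auto
  note head_ge = sum_strictly_supported_ge[OF _ nonneg_head head a g]
  note tail_ge = sum_strictly_supported_ge[OF _ nonneg_tail tail b g]
  show "(\<Sum>m\<in>{1..M}. g (block_vec N M s m)) \<le> (\<Sum>m\<in>{1..M}. g (P m))"
    using head_ge tail_ge vec split_P by simp
  assume le: "(\<Sum>m\<in>{1..M}. g (P m)) \<le> (\<Sum>m\<in>{1..M}. g (block_vec N M s m))"
  show "\<forall>m\<in>{1..M}. P m = block_vec N M s m"
  proof (rule ccontr)
    assume "\<not> (\<forall>m\<in>{1..M}. P m = block_vec N M s m)"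
    then obtain j where j: "j \<in> {1..M}" "P j \<noteq> block_vec N M s j" by blast
    show False
    proof (cases "j \<le> N")
      case True
      then have "real (card {1..N}) * g a < (\<Sum>m\<in>{1..N}. g (P m))"
        using sum_strictly_supported_gt[OF _ nonneg_head head a g, of j] j
        by (simp add: block_vec_def a_def)
      then show False using tail_ge le vec split_P by simp
    next
      case False
      then have "real (card {N+1..M}) * g b < (\<Sum>m\<in>{N+1..M}. g (P m))"
        using sum_strictly_supported_gt[OF _ nonneg_tail tail b g, of j] j
        by (simp add: block_vec_def b_def)
      then show False using head_ge le vec split_P by simp
    qed
  qed
qed

text \<open>The sign for \<open>\<alpha> < 1\<close> compensates the negative factor \<open>1/(\<alpha> - 1)\<close> in \<open>D\<^sub>\<alpha>\<close>.\<close>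

definition renyi_kernel :: "real \<Rightarrow> real \<Rightarrow> real" where
  "renyi_kernel \<alpha> t = (if \<alpha> = 1 then t * ln t else if 1 < \<alpha> then t powr \<alpha> else - (t powr \<alpha>))"

lemma strictly_supported_renyi_kernel:
  assumes "0 < \<alpha>"
  shows "strictly_supported (renyi_kernel \<alpha>)"
proof -
  consider "\<alpha> = 1" | "1 < \<alpha>" | "\<alpha> < 1" by linarith
  then show ?thesis
    unfolding renyi_kernel_def[abs_def]
    by cases (simp_all add: assms strictly_supported_xlnx strictly_supported_powr
        strictly_supported_neg_powr)
qed

lemma prob_vec_sum_powr_pos:
  assumes "prob_vec M P"
  shows "0 < (\<Sum>m\<in>{1..M}. P m powr \<alpha>)"
proof -
  obtain j where j: "j \<in> {1..M}" "P j \<noteq> 0"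
    using assms unfolding prob_vec_def by (metis sum.neutral zero_neq_one)
  show ?thesis
    using assms j by (intro sum_pos2[OF _ j(1)]) (auto simp: prob_vec_def)
qed

lemma renyi_div_one_uniform:
  assumes "0 < M" "prob_vec M P"
  shows "renyi_div 1 M P (uniform_dist M) = ln (real M) + (\<Sum>m\<in>{1..M}. P m * ln (P m))"
proof -
  have summand: "(if P m = 0 then 0 else P m * ln (P m / (1 / real M)))
      = P m * ln (P m) + P m * ln (real M)" if "m \<in> {1..M}" for m
  proof (cases "P m = 0")
    case False
    then have "0 < P m" using assms(2) that unfolding prob_vec_def by force
    then show ?thesis using assms(1) by (simp add: ln_mult distrib_left)
  qed simp
  have "renyi_div 1 M P (uniform_dist M) = (\<Sum>m\<in>{1..M}. P m * ln (P m) + P m * ln (real M))"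
    unfolding renyi_div_def uniform_dist_def using summand by simp
  also have "\<dots> = ln (real M) + (\<Sum>m\<in>{1..M}. P m * ln (P m))"
    using assms(2) by (simp add: prob_vec_def sum.distrib sum_distrib_right[symmetric])
  finally show ?thesis .
qed

lemma renyi_div_uniform:
  assumes "\<alpha> \<noteq> 1" "0 < M" "prob_vec M P"
  shows "renyi_div \<alpha> M P (uniform_dist M)
           = ln (real M) + ln (\<Sum>m\<in>{1..M}. P m powr \<alpha>) / (\<alpha> - 1)"
proof -
  have "(1 / real M) powr (1 - \<alpha>) = real M powr (\<alpha> - 1)"
    using assms(2) by (simp add: powr_divide powr_minus_divide[symmetric])
  then have "(\<Sum>m\<in>{1..M}. P m powr \<alpha> * (1 / real M) powr (1 - \<alpha>))
      = real M powr (\<alpha> - 1) * (\<Sum>m\<in>{1..M}. P m powr \<alpha>)"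
    by (simp add: sum_distrib_left mult.commute)
  then show ?thesis
    using assms prob_vec_sum_powr_pos[OF assms(3), of \<alpha>]
    by (simp add: renyi_div_def uniform_dist_def ln_mult ln_powr field_simps)
qed

lemma renyi_div_uniform_le_iff:
  assumes "0 < \<alpha>" "0 < M" "prob_vec M P" "prob_vec M Q"
  shows "renyi_div \<alpha> M P (uniform_dist M) \<le> renyi_div \<alpha> M Q (uniform_dist M)
    \<longleftrightarrow> (\<Sum>m\<in>{1..M}. renyi_kernel \<alpha> (P m)) \<le> (\<Sum>m\<in>{1..M}. renyi_kernel \<alpha> (Q m))"
proof -
  consider "\<alpha> = 1" | "1 < \<alpha>" | "\<alpha> < 1" by linarith
  then show ?thesis
  proof cases
    case 1
    then show ?thesis
      using renyi_div_one_uniform[OF assms(2)] assms(3,4) by (simp add: renyi_kernel_def)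
  next
    case 2
    then show ?thesis
      using renyi_div_uniform[OF _ assms(2)] assms(3,4)
        prob_vec_sum_powr_pos[OF assms(3), of \<alpha>] prob_vec_sum_powr_pos[OF assms(4), of \<alpha>]
      by (simp add: renyi_kernel_def divide_le_cancel)
  next
    case 3
    then show ?thesis
      using renyi_div_uniform[OF _ assms(2)] assms(3,4)
        prob_vec_sum_powr_pos[OF assms(3), of \<alpha>] prob_vec_sum_powr_pos[OF assms(4), of \<alpha>]
      by (simp add: renyi_kernel_def divide_le_cancel sum_negf)
  qed
qed

lemma block_vec_renyi_minimizers:
  assumes "0 < \<alpha>" "1 \<le> N" "N < M" "0 \<le> s" "s \<le> 1" "block_feasible N M s P"
  shows "(\<forall>Q. block_feasible N M s Q
             \<longrightarrow> renyi_div \<alpha> M P (uniform_dist M) \<le> renyi_div \<alpha> M Q (uniform_dist M))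
    \<longleftrightarrow> (\<forall>m\<in>{1..M}. P m = block_vec N M s m)"
proof -
  define \<Phi> where "\<Phi> R = (\<Sum>m\<in>{1..M}. renyi_kernel \<alpha> (R m))" for R
  have le_iff: "renyi_div \<alpha> M P (uniform_dist M) \<le> renyi_div \<alpha> M Q (uniform_dist M)
      \<longleftrightarrow> \<Phi> P \<le> \<Phi> Q" if "block_feasible N M s Q" for Q
    using renyi_div_uniform_le_iff[OF assms(1)] assms that
    unfolding \<Phi>_def block_feasible_def by simp
  note minimizes = block_vec_minimizes[OF strictly_supported_renyi_kernel[OF assms(1)] assms(2-5)]
  note feasible = block_vec_feasible[OF assms(2-5)]
  show ?thesis
  proof
    assume "\<forall>Q. block_feasible N M s Q
             \<longrightarrow> renyi_div \<alpha> M P (uniform_dist M) \<le> renyi_div \<alpha> M Q (uniform_dist M)"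
    then have "\<Phi> P \<le> \<Phi> (block_vec N M s)"
      using feasible le_iff by blast
    then show "\<forall>m\<in>{1..M}. P m = block_vec N M s m"
      using minimizes(2)[OF assms(6)] unfolding \<Phi>_def by blast
  next
    assume "\<forall>m\<in>{1..M}. P m = block_vec N M s m"
    then have "\<Phi> P = \<Phi> (block_vec N M s)"
      unfolding \<Phi>_def by simp
    then show "\<forall>Q. block_feasible N M s Q
             \<longrightarrow> renyi_div \<alpha> M P (uniform_dist M) \<le> renyi_div \<alpha> M Q (uniform_dist M)"
      using minimizes(1) le_iff unfolding \<Phi>_def by auto
  qed
qed

lemma renyi_div_inf_uniform:
  assumes "0 < M"
  shows "renyi_div_inf M P (uniform_dist M) = ln (real M * Max (P ` {1..M}))"
proof -
  have "Max ((\<lambda>m. P m / uniform_dist M m) ` {1..M}) = Max ((\<lambda>x. real M * x) ` P ` {1..M})"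
    by (simp add: uniform_dist_def image_image mult.commute)
  also have "\<dots> = real M * Max (P ` {1..M})"
    using assms by (intro mono_Max_commute[symmetric]) (auto intro: monoI mult_left_mono)
  finally show ?thesis
    unfolding renyi_div_inf_def by simp
qed

lemma prob_vec_Max_pos:
  assumes "prob_vec M P"
  shows "0 < Max (P ` {1..M})"
proof -
  obtain j where j: "j \<in> {1..M}" "P j \<noteq> 0"
    using assms unfolding prob_vec_def by (metis sum.neutral zero_neq_one)
  then have "0 < P j" using assms unfolding prob_vec_def by force
  also have "P j \<le> Max (P ` {1..M})" using j by simp
  finally show ?thesis .
qed

lemma renyi_div_inf_uniform_le_iff:
  assumes "prob_vec M P" "prob_vec M Q"
  shows "renyi_div_inf M P (uniform_dist M) \<le> renyi_div_inf M Q (uniform_dist M)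
    \<longleftrightarrow> Max (P ` {1..M}) \<le> Max (Q ` {1..M})"
proof -
  have "0 < M"
    using assms(1) unfolding prob_vec_def by (cases M) auto
  then show ?thesis
    using prob_vec_Max_pos[OF assms(1)] prob_vec_Max_pos[OF assms(2)]
    by (simp add: renyi_div_inf_uniform)
qed

lemma block_feasible_Max_ge:
  assumes "1 \<le> N" "N \<le> M" "block_feasible N M s P"
  shows "(1 - s) / real N \<le> Max (P ` {1..M})"
proof (rule ccontr)
  assume "\<not> ?thesis"
  then have "\<forall>m\<in>{1..N}. P m < (1 - s) / real N"
    using assms(2) by (auto simp: not_le)
  then have "sum P {1..N} < (\<Sum>m\<in>{1..N}. (1 - s) / real N)"
    using assms(1) by (intro sum_strict_mono) auto
  then show False
    using block_feasible_head_sum[OF assms(2,3)] assms(1) by simp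
qed

lemma block_feasible_le_head_iff:
  assumes "1 \<le> N" "N \<le> M" "block_feasible N M s P"
  shows "(\<forall>m\<in>{1..M}. P m \<le> (1 - s) / real N)
    \<longleftrightarrow> (\<forall>m\<in>{1..N}. P m = (1 - s) / real N)
      \<and> (\<forall>m\<in>{N+1..M}. 0 \<le> P m \<and> P m \<le> (1 - s) / real N)
      \<and> (\<Sum>m\<in>{N+1..M}. P m) = s"
proof -
  let ?a = "(1 - s) / real N"
  have "\<forall>m\<in>{1..N}. P m = ?a" if le: "\<forall>m\<in>{1..M}. P m \<le> ?a"
  proof (rule ccontr)
    assume "\<not> (\<forall>m\<in>{1..N}. P m = ?a)"
    then obtain j where j: "j \<in> {1..N}" "P j \<noteq> ?a" by blast
    have "sum P {1..N} < (\<Sum>m\<in>{1..N}. ?a)"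
      using le j assms(2) by (intro sum_strict_mono_ex1) (auto simp: order.strict_iff_order)
    then show False
      using block_feasible_head_sum[OF assms(2,3)] assms(1) by simp
  qed
  moreover have "m \<in> {1..N} \<or> m \<in> {N+1..M}" if "m \<in> {1..M}" for m
    using that by auto
  ultimately show ?thesis
    using assms(2,3) unfolding block_feasible_def prob_vec_def by fastforce
qed

lemma block_vec_renyi_inf_minimizers:
  assumes "1 \<le> N" "N < M" "0 \<le> s" "s \<le> 1"
    and tail_le_head: "s / (real M - real N) \<le> (1 - s) / real N"
    and P: "block_feasible N M s P"
  shows "(\<forall>Q. block_feasible N M s Q
             \<longrightarrow> renyi_div_inf M P (uniform_dist M) \<le> renyi_div_inf M Q (uniform_dist M))
    \<longleftrightarrow> (\<forall>m\<in>{1..M}. P m \<le> (1 - s) / real N)"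
proof -
  let ?a = "(1 - s) / real N"
  have Max_le_head_iff: "Max (R ` {1..M}) \<le> ?a \<longleftrightarrow> (\<forall>m\<in>{1..M}. R m \<le> ?a)" for R
    using assms(1,2) by (subst Max_le_iff) auto
  have P_prob: "prob_vec M P"
    using P unfolding block_feasible_def ..
  have feasible: "block_feasible N M s (block_vec N M s)"
    by (rule block_vec_feasible[OF assms(1-4)])
  then have vec_prob: "prob_vec M (block_vec N M s)"
    unfolding block_feasible_def ..
  have vec_le: "Max (block_vec N M s ` {1..M}) \<le> ?a"
    unfolding Max_le_head_iff using tail_le_head by (simp add: block_vec_def)
  show ?thesis
  proof
    assume "\<forall>Q. block_feasible N M s Q
              \<longrightarrow> renyi_div_inf M P (uniform_dist M) \<le> renyi_div_inf M Q (uniform_dist M)"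
    then have "Max (P ` {1..M}) \<le> Max (block_vec N M s ` {1..M})"
      using feasible renyi_div_inf_uniform_le_iff[OF P_prob vec_prob] by blast
    then show "\<forall>m\<in>{1..M}. P m \<le> ?a"
      using vec_le Max_le_head_iff[of P] by linarith
  next
    assume "\<forall>m\<in>{1..M}. P m \<le> ?a"
    then have P_le: "Max (P ` {1..M}) \<le> ?a"
      using Max_le_head_iff by blast
    show "\<forall>Q. block_feasible N M s Q
            \<longrightarrow> renyi_div_inf M P (uniform_dist M) \<le> renyi_div_inf M Q (uniform_dist M)"
    proof (intro allI impI)
      fix Q
      assume Q: "block_feasible N M s Q"
      then have "Max (P ` {1..M}) \<le> Max (Q ` {1..M})"
        using P_le block_feasible_Max_ge[OF assms(1) less_imp_le[OF assms(2)] Q] by linarith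
      then show "renyi_div_inf M P (uniform_dist M) \<le> renyi_div_inf M Q (uniform_dist M)"
        using Q renyi_div_inf_uniform_le_iff[OF P_prob] unfolding block_feasible_def by blast
    qed
  qed
qed

lemma feasible_eq_block_feasible:
  assumes "1 \<le> L" "N \<le> num_opts N K L"
  shows "feasible N K L D = {P. block_feasible N (num_opts N K L) (real L * (D - 1)) P}"
proof -
  let ?M = "num_opts N K L"
  have cost_sum: "(\<Sum>m\<in>{1..?M}. P m * cost N L m) = real L * sum P {1..?M} + sum P {N+1..?M}"
    for P
  proof -
    have "(\<Sum>m\<in>{1..?M}. P m * cost N L m)
        = real L * sum P {1..N} + (real L + 1) * sum P {N+1..?M}"
      using sum_split_at[OF assms(2), of "\<lambda>m. P m * cost N L m"]
      by (simp add: cost_def sum_distrib_left mult.commute)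
    also have "\<dots> = real L * sum P {1..?M} + sum P {N+1..?M}"
      using sum_split_at[OF assms(2), of P] by (simp add: algebra_simps)
    finally show ?thesis .
  qed
  have cost_constraint_iff: "(1 / real L) * (\<Sum>m\<in>{1..?M}. P m * cost N L m) = D
      \<longleftrightarrow> sum P {N+1..?M} = real L * (D - 1)" if "sum P {1..?M} = 1" for P
    using assms(1) that cost_sum[of P] by (auto simp: field_simps)
  show ?thesis
    unfolding feasible_def block_feasible_def prob_vec_def using cost_constraint_iff by blast
qed

lemma geometric_sum_reciprocal:
  fixes L :: real
  assumes "0 \<le> L"
  shows "L * ((\<Sum>k<Suc n. (1 / (L + 1)) ^ k) - 1) = 1 - (1 / (L + 1)) ^ n"
proof (induction n)
  case (Suc n)
  define q where "q = 1 / (L + 1)"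
  have q: "1 - L * q = q"
    using assms by (simp add: q_def field_simps)
  have "L * ((\<Sum>k<Suc (Suc n). q ^ k) - 1) = L * ((\<Sum>k<Suc n. q ^ k) - 1) + L * q ^ Suc n"
    by (simp add: algebra_simps)
  also have "\<dots> = 1 - q ^ n * (1 - L * q)"
    using Suc by (simp add: q_def algebra_simps)
  also have "\<dots> = 1 - q ^ Suc n"
    using q by simp
  finally show ?case
    unfolding q_def .
qed simp

lemma cost_bound_tail_mass:
  assumes "L + 1 \<le> N" "1 \<le> K" "D \<le> 1 / const_C N K"
  shows "real L * (D - 1) \<le> 1 - 1 / (real L + 1) ^ (K - 1)"
proof -
  let ?q = "1 / (real L + 1)"
  have "D \<le> (\<Sum>k<K. 1 / real N ^ k)"
    using assms(3) by (simp add: const_C_def)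
  also have "\<dots> \<le> (\<Sum>k<K. ?q ^ k)"
  proof (rule sum_mono)
    fix k
    have "1 / real N \<le> ?q"
      using assms(1) by (intro divide_left_mono) auto
    then show "1 / real N ^ k \<le> ?q ^ k"
      by (simp add: power_mono power_one_over[symmetric])
  qed
  also have "\<dots> = (\<Sum>k<Suc (K - 1). ?q ^ k)"
    using assms(2) by simp
  finally have "real L * (D - 1) \<le> real L * ((\<Sum>k<Suc (K - 1). ?q ^ k) - 1)"
    by (intro mult_left_mono) auto
  also have "\<dots> = 1 - ?q ^ (K - 1)"
    by (rule geometric_sum_reciprocal) simp
  finally show ?thesis
    by (simp add: power_one_over)
qed

lemma tail_mass_admissible:
  assumes "3 \<le> N" "2 \<le> K" "1 \<le> L" "L < N - 1" "1 \<le> D" "D \<le> 1 / const_C N K"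
  defines "M \<equiv> num_opts N K L" and "s \<equiv> real L * (D - 1)"
  shows "N < M" "0 \<le> s" "s \<le> 1" "s / (real M - real N) \<le> (1 - s) / real N"
proof -
  define r where "r = (real L + 1) ^ (K - 1)"
  have real_M: "real M = real N * r"
    unfolding M_def r_def num_opts_def by (simp add: add.commute)
  have "2 \<le> real L + 1"
    using assms(3) by simp
  also have "\<dots> \<le> r"
    unfolding r_def using power_increasing[of 1 "K - 1" "real L + 1"] assms(2) by simp
  finally have r: "2 \<le> r" .
  have "real N * 1 < real N * r"
    using r assms(1) by (intro mult_strict_left_mono) auto
  then show "N < M"
    unfolding real_M[symmetric] by simp
  show "0 \<le> s"
    unfolding s_def using assms(5) by simp
  have s_le: "s \<le> 1 - 1 / r"
    unfolding s_def r_def using cost_bound_tail_mass[OF _ _ assms(6)] assms(2,4) by simp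
  moreover have "0 \<le> 1 / r"
    using r by simp
  ultimately show "s \<le> 1"
    by linarith
  have "(1 + r * s) * real N \<le> r * real N"
    using s_le r by (intro mult_right_mono) (auto simp: field_simps)
  then show "s / (real M - real N) \<le> (1 - s) / real N"
    using r assms(1) unfolding real_M by (simp add: field_simps)
qed

theorem lemma2:
  fixes N K L :: nat and D :: real
  assumes hN: "N \<ge> 3" and hK: "K \<ge> 2" and hL1: "1 \<le> L" and hL2: "L < N - 1"
    and hD1: "1 \<le> D" and hD2: "D \<le> 1 / const_C N K"
  defines "M \<equiv> num_opts N K L"
    and "U \<equiv> uniform_dist (num_opts N K L)"
    and "F \<equiv> feasible N K L D"
    and "pstar \<equiv> (\<lambda>m. if m \<le> N then (1 - real L * (D - 1)) / real N
                        else real L * (D - 1) / (real N * (real L + 1) ^ (K - 1) - real N))"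
  shows
    "(\<forall>\<alpha>::real. 0 < \<alpha> \<longrightarrow>
        pstar \<in> F \<and>
        (\<forall>P\<in>F. (\<forall>Q\<in>F. renyi_div \<alpha> M P U \<le> renyi_div \<alpha> M Q U)
                 \<longleftrightarrow> (\<forall>m\<in>{1..M}. P m = pstar m)))
     \<and>
     (\<forall>P\<in>F. (\<forall>Q\<in>F. renyi_div_inf M P U \<le> renyi_div_inf M Q U)
        \<longleftrightarrow> ((\<forall>m\<in>{1..N}. P m = (1 - real L * (D - 1)) / real N)
             \<and> (\<forall>m\<in>{N+1..M}. 0 \<le> P m \<and> P m \<le> (1 - real L * (D - 1)) / real N)
             \<and> (\<Sum>m\<in>{N+1..M}. P m) = real L * (D - 1)))"
proof -
  define s where "s = real L * (D - 1)"
  note admissible = tail_mass_admissible[OF hN hK hL1 hL2 hD1 hD2, folded M_def s_def]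
  have "1 \<le> N"
    using hN by simp
  have F: "F = {P. block_feasible N M s P}"
    using feasible_eq_block_feasible[OF hL1] admissible(1) unfolding F_def M_def s_def by simp
  have real_M: "real M = real N * (real L + 1) ^ (K - 1)"
    unfolding M_def num_opts_def by (simp add: add.commute)
  have pstar: "pstar = block_vec N M s"
    unfolding pstar_def block_vec_def s_def real_M ..
  note minimizers = block_vec_renyi_minimizers[OF _ \<open>1 \<le> N\<close> admissible(1-3)]
  note inf_minimizers = block_vec_renyi_inf_minimizers[OF \<open>1 \<le> N\<close> admissible]
  note feasible = block_vec_feasible[OF \<open>1 \<le> N\<close> admissible(1-3)]
  note head_iff = block_feasible_le_head_iff[OF \<open>1 \<le> N\<close> less_imp_le[OF admissible(1)]]
  show ?thesis
    unfolding F pstar U_def M_def[symmetric] s_def[symmetric]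
    using minimizers inf_minimizers feasible head_iff by auto
qed

end
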